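(* Let $G$ be an $\varepsilon$-graph with finite vertex set $\mathcal{V}\subset\mathbb{R}^K$. Then for all $x,y\in\mathcal{V}$, $$\tfrac14\,\varepsilon\,\big(d_{G,SP}(x,y)-1\big)\le d_{G,E}(x,y)\le\varepsilon\,d_{G,SP}(x,y).$$
   Context: The $\varepsilon$-graph on $\mathcal{V}$ joins distinct $x,y$ iff $\|x-y\|\le\varepsilon$. For a path $p=(v_0,\dots,v_l)$ in $G$ let $l=|p|$ be its number of edges. $d_{G,SP}(x,y)=\min_p|p|$ and $d_{G,E}(x,y)=\min_p\sum_{i=1}^{|p|}\|v_{i-1}-v_i\|$, minima over paths from $x$ to $y$ (the graph is assumed connected so these are finite). *)

theory Defs
  imports "HOL-Analysis.Analysis"
begin

definition eps_adj :: "real \<Rightarrow> 'a::real_normed_vector set \<Rightarrow> 'a \<Rightarrow> 'a \<Rightarrow> bool" where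
  "eps_adj eps V x y \<longleftrightarrow> x \<in> V \<and> y \<in> V \<and> x \<noteq> y \<and> norm (x - y) \<le> eps"

definition eps_path :: "real \<Rightarrow> 'a::real_normed_vector set \<Rightarrow> 'a list \<Rightarrow> bool" where
  "eps_path eps V p \<longleftrightarrow> p \<noteq> [] \<and> set p \<subseteq> V \<and>
     (\<forall>i < length p - 1. eps_adj eps V (p ! i) (p ! Suc i))"

definition eps_paths :: "real \<Rightarrow> 'a::real_normed_vector set \<Rightarrow> 'a \<Rightarrow> 'a \<Rightarrow> 'a list set" where
  "eps_paths eps V x y = {p. eps_path eps V p \<and> hd p = x \<and> last p = y}"

definition path_len :: "'a list \<Rightarrow> nat" where
  "path_len p = length p - 1"

definition path_eucl_len :: "'a::real_normed_vector list \<Rightarrow> real" where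
  "path_eucl_len p = (\<Sum>i < length p - 1. norm (p ! i - p ! Suc i))"

definition d_SP :: "real \<Rightarrow> 'a::real_normed_vector set \<Rightarrow> 'a \<Rightarrow> 'a \<Rightarrow> nat" where
  "d_SP eps V x y = (INF p \<in> eps_paths eps V x y. path_len p)"

definition d_E :: "real \<Rightarrow> 'a::real_normed_vector set \<Rightarrow> 'a \<Rightarrow> 'a \<Rightarrow> real" where
  "d_E eps V x y = (INF p \<in> eps_paths eps V x y. path_eucl_len p)"

definition eps_graph_connected :: "real \<Rightarrow> 'a::real_normed_vector set \<Rightarrow> bool" where
  "eps_graph_connected eps V \<longleftrightarrow> (\<forall>x\<in>V. \<forall>y\<in>V. eps_paths eps V x y \<noteq> {})"

end

theory Submission
  imports Defs
begin

(* Shortcut a path greedily: drop the middle vertex b of consecutive vertices a, b, c whenever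
   dist a c \<le> eps.  By the triangle inequality this never increases the Euclidean length, and
   in the resulting path every two consecutive edges are together longer than eps, so a path of
   Euclidean length d yields one with at most 2 d / eps + 1 edges.  Hence
   eps (d_SP - 1) \<le> 2 d_E, which is stronger than the factor 1/4.  The upper bound holds because every edge has length at most eps. *)

lemma eps_path_iff_successively:
  "eps_path eps V p \<longleftrightarrow> p \<noteq> [] \<and> set p \<subseteq> V \<and> successively (eps_adj eps V) p"
  unfolding eps_path_def successively_conv_nth by (auto simp: less_diff_conv)

lemma eps_path_successively_dist:
  "eps_path eps V p \<Longrightarrow> successively (\<lambda>a b. dist a b \<le> eps) p"
  unfolding eps_path_iff_successively
  by (auto simp: eps_adj_def dist_norm elim: successively_mono)

lemma path_eucl_len_Nil [simp]: "path_eucl_len [] = 0"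
  and path_eucl_len_singleton [simp]: "path_eucl_len [a] = 0"
  by (simp_all add: path_eucl_len_def)

lemma path_eucl_len_Cons_Cons [simp]:
  "path_eucl_len (a # b # r) = dist a b + path_eucl_len (b # r)"
  unfolding path_eucl_len_def dist_norm by (simp add: sum.lessThan_Suc_shift del: sum.lessThan_Suc)

lemma path_eucl_len_nonneg: "path_eucl_len p \<ge> 0"
  unfolding path_eucl_len_def by (simp add: sum_nonneg)

lemma path_eucl_len_le:
  "successively (\<lambda>a b. dist a b \<le> eps) p \<Longrightarrow> path_eucl_len p \<le> eps * real (path_len p)"
  by (induction p rule: induct_list012) (auto simp: path_len_def algebra_simps)

(* Shortcuts are taken in walks, whose consecutive points may coincide (a shortcut from a to c
   may have a = c); repeated points are removed afterwards with remdups_adj. *)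
lemma close_walk_shortcut:
  fixes w :: "'a::real_normed_vector list"
  assumes "eps > 0" and "successively (\<lambda>a b. dist a b \<le> eps) w" and "w \<noteq> []"
  shows "\<exists>w'. successively (\<lambda>a b. dist a b \<le> eps) w' \<and> w' \<noteq> [] \<and> set w' \<subseteq> set w \<and>
    hd w' = hd w \<and> last w' = last w \<and> eps * real (length w' - 1) \<le> 2 * path_eucl_len w + eps"
  using assms(2,3)
proof (induction "length w" arbitrary: w rule: less_induct)
  case less
  consider (short) "length w \<le> 2" | (long) a b c r where "w = a # b # c # r"
    by (cases w; cases "tl w"; cases "tl (tl w)") auto
  then show ?case
  proof cases
    case short
    then have "eps * real (length w - 1) \<le> eps"
      using \<open>eps > 0\<close> by (simp add: mult_le_cancel_left1)
    then show ?thesis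
      using less.prems path_eucl_len_nonneg[of w] by (intro exI[of _ w]) auto
  next
    case long
    have steps: "dist a b \<le> eps" "dist b c \<le> eps" "successively (\<lambda>a b. dist a b \<le> eps) (c # r)"
      using less.prems long by auto
    have len: "path_eucl_len w = dist a b + dist b c + path_eucl_len (c # r)"
      using long by simp
    show ?thesis
    proof (cases "dist a c \<le> eps")
      case True
      have "successively (\<lambda>a b. dist a b \<le> eps) (a # c # r)"
        using True steps(3) by simp
      then obtain w' where w': "successively (\<lambda>a b. dist a b \<le> eps) w'" "w' \<noteq> []"
          "set w' \<subseteq> set (a # c # r)" "hd w' = a" "last w' = last (c # r)"
          "eps * real (length w' - 1) \<le> 2 * path_eucl_len (a # c # r) + eps"
        using less.hyps[of "a # c # r"] long by fastforce
      have "path_eucl_len (a # c # r) \<le> path_eucl_len w"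
        using len dist_triangle[of a c b] by (simp add: dist_commute)
      then show ?thesis
        using w' long by (intro exI[of _ w']) auto
    next
      case False
      obtain w' where w': "successively (\<lambda>a b. dist a b \<le> eps) w'" "w' \<noteq> []"
          "set w' \<subseteq> set (c # r)" "hd w' = c" "last w' = last (c # r)"
          "eps * real (length w' - 1) \<le> 2 * path_eucl_len (c # r) + eps"
        using less.hyps[of "c # r"] steps(3) long by fastforce
      have "eps < dist a b + dist b c"
        using False dist_triangle[of a c b] by (simp add: dist_commute)
      then have "eps * real (length (a # b # w') - 1) \<le> 2 * path_eucl_len w + eps"
        using w'(2,6) len by (cases w') (auto simp: algebra_simps)
      moreover have "successively (\<lambda>a b. dist a b \<le> eps) (a # b # w')"
        using w'(1,2,4) steps by (cases w') auto
      ultimately show ?thesis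
        using w' long by (intro exI[of _ "a # b # w'"]) auto
    qed
  qed
qed

lemma eps_path_remdups_adj:
  assumes "successively (\<lambda>a b. dist a b \<le> eps) w" and "w \<noteq> []" and "set w \<subseteq> V"
  shows "eps_path eps V (remdups_adj w)"
proof -
  have "successively (\<noteq>) (remdups_adj w)"
    using distinct_adj_remdups_adj by (simp add: distinct_adj_def)
  moreover have "successively (\<lambda>a b. dist a b \<le> eps) (remdups_adj w)"
    using assms(1) by (rule successively_remdups_adjI)
  ultimately have "successively (\<lambda>a b. a \<noteq> b \<and> dist a b \<le> eps) (remdups_adj w)"
    by (simp add: successively_conv_nth)
  then have "successively (eps_adj eps V) (remdups_adj w)"
    by (rule successively_mono) (use assms(3) in \<open>auto simp: eps_adj_def dist_norm\<close>)
  then show ?thesis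
    using assms(2,3) by (simp add: eps_path_iff_successively)
qed

lemma d_SP_attained:
  assumes "eps_paths eps V x y \<noteq> {}"
  obtains p where "p \<in> eps_paths eps V x y" and "path_len p = d_SP eps V x y"
proof -
  have "d_SP eps V x y \<in> path_len ` eps_paths eps V x y"
    unfolding d_SP_def using assms by (intro Inf_nat_def1) auto
  then show thesis
    using that by (metis imageE)
qed

lemma d_SP_le_path_len:
  "p \<in> eps_paths eps V x y \<Longrightarrow> d_SP eps V x y \<le> path_len p"
  unfolding d_SP_def by (rule cINF_lower) auto

lemma d_E_le_path_eucl_len:
  "p \<in> eps_paths eps V x y \<Longrightarrow> d_E eps V x y \<le> path_eucl_len p"
  unfolding d_E_def by (rule cINF_lower) (auto intro: bdd_belowI[of _ 0] path_eucl_len_nonneg)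

lemma d_E_nonneg:
  "eps_paths eps V x y \<noteq> {} \<Longrightarrow> d_E eps V x y \<ge> 0"
  unfolding d_E_def by (rule cINF_greatest) (auto intro: path_eucl_len_nonneg)

lemma d_E_le_d_SP:
  assumes "eps_paths eps V x y \<noteq> {}"
  shows "d_E eps V x y \<le> eps * real (d_SP eps V x y)"
proof -
  obtain p where p: "p \<in> eps_paths eps V x y" and len: "path_len p = d_SP eps V x y"
    using assms by (rule d_SP_attained)
  have "successively (\<lambda>a b. dist a b \<le> eps) p"
    using p eps_path_successively_dist by (auto simp: eps_paths_def)
  then have "path_eucl_len p \<le> eps * real (d_SP eps V x y)"
    using len path_eucl_len_le by metis
  then show ?thesis
    using d_E_le_path_eucl_len[OF p] by linarith
qed

lemma d_SP_le_path_eucl_len: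
  assumes "eps > 0" and p: "p \<in> eps_paths eps V x y"
  shows "eps * (real (d_SP eps V x y) - 1) \<le> 2 * path_eucl_len p"
proof -
  have walk: "successively (\<lambda>a b. dist a b \<le> eps) p" "p \<noteq> []" "set p \<subseteq> V"
    using p eps_path_successively_dist by (auto simp: eps_paths_def eps_path_def)
  obtain w where w: "successively (\<lambda>a b. dist a b \<le> eps) w" "w \<noteq> []" "set w \<subseteq> set p"
      "hd w = hd p" "last w = last p" "eps * real (length w - 1) \<le> 2 * path_eucl_len p + eps"
    using close_walk_shortcut[OF assms(1) walk(1,2)] by blast
  have "remdups_adj w \<in> eps_paths eps V x y"
    using w walk(3) p eps_path_remdups_adj[OF w(1,2)] by (auto simp: eps_paths_def)
  then have "d_SP eps V x y \<le> length w - 1"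
    using d_SP_le_path_len remdups_adj_length unfolding path_len_def by (meson diff_le_mono le_trans)
  then have "eps * real (d_SP eps V x y) \<le> eps * real (length w - 1)"
    using assms(1) by simp
  then show ?thesis
    using w(6) by (simp add: algebra_simps)
qed

lemma d_SP_le_d_E:
  assumes "eps > 0" and "eps_paths eps V x y \<noteq> {}"
  shows "eps * (real (d_SP eps V x y) - 1) / 2 \<le> d_E eps V x y"
  unfolding d_E_def
  using d_SP_le_path_eucl_len[OF assms(1)] by (intro cINF_greatest[OF assms(2)]) force

theorem mainTheorem7:
  fixes V :: "(real ^ 'k) set" and eps :: real and x y :: "real ^ 'k"
  assumes "finite V" and "eps > 0" and "eps_graph_connected eps V"
    and "x \<in> V" and "y \<in> V"
  shows "1/4 * eps * (real (d_SP eps V x y) - 1) \<le> d_E eps V x y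
       \<and> d_E eps V x y \<le> eps * real (d_SP eps V x y)"
proof
  have paths: "eps_paths eps V x y \<noteq> {}"
    using assms(3-5) unfolding eps_graph_connected_def by blast
  show "1/4 * eps * (real (d_SP eps V x y) - 1) \<le> d_E eps V x y"
    using d_SP_le_d_E[OF assms(2) paths] d_E_nonneg[OF paths] by linarith
  show "d_E eps V x y \<le> eps * real (d_SP eps V x y)"
    using paths by (rule d_E_le_d_SP)
qed

end
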